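(* Let $\Gamma$ be a Taylor graph with vertex set $X$. For each $x\in X$, the Terwilliger algebra $T(x)$ of $\Gamma$ has dimension $\dim(T(x))=24$.
   Context: A Taylor graph is a distance-regular graph with intersection array $\{k,b,1;1,b,k\}$ where $b<k-1$; it has diameter $3$. Let $A$ be its adjacency matrix, $\partial$ its distance, and for $x\in X$ and $0\le i\le 3$ let $E^*_i(x)$ be the diagonal matrix with $(E^*_i(x))_{yy}=1$ if $\partial(x,y)=i$ and $0$ otherwise. The Terwilliger algebra $T(x)$ is the subalgebra of $\mathrm{Mat}_X(\mathbb{C})$ generated by $A,E^*_0(x),\dots,E^*_3(x)$; its dimension is as a complex vector space. *)

theory Defs
  imports "HOL-Analysis.Analysis"
begin

text \<open>Finite simple graphs on the vertex type 'n (vertex set X = UNIV),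
  given by an adjacency relation E.\<close>

definition simple_graph :: "('n \<Rightarrow> 'n \<Rightarrow> bool) \<Rightarrow> bool" where
  "simple_graph E \<longleftrightarrow> (\<forall>x y. E x y \<longrightarrow> E y x) \<and> (\<forall>x. \<not> E x x)"

definition connected_graph :: "('n \<Rightarrow> 'n \<Rightarrow> bool) \<Rightarrow> bool" where
  "connected_graph E \<longleftrightarrow> (\<forall>x y. \<exists>i. (E ^^ i) x y)"

text \<open>Path-length distance (meaningful for connected graphs).\<close>
definition gdist :: "('n \<Rightarrow> 'n \<Rightarrow> bool) \<Rightarrow> 'n \<Rightarrow> 'n \<Rightarrow> nat" where
  "gdist E x y = (LEAST i. (E ^^ i) x y)"

definition distance_regular ::
  "('n::finite \<Rightarrow> 'n \<Rightarrow> bool) \<Rightarrow> nat \<Rightarrow> (nat \<Rightarrow> nat) \<Rightarrow> (nat \<Rightarrow> nat) \<Rightarrow> bool" where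
  "distance_regular E d b c \<longleftrightarrow>
     simple_graph E \<and> connected_graph E \<and>
     (\<forall>x y. gdist E x y \<le> d) \<and> (\<exists>x y. gdist E x y = d) \<and>
     (\<forall>x y. let i = gdist E x y in
        (1 \<le> i \<longrightarrow> card {z. gdist E x z = i - 1 \<and> E y z} = c i) \<and>
        (i < d \<longrightarrow> card {z. gdist E x z = i + 1 \<and> E y z} = b i))"

definition taylor_graph :: "('n::finite \<Rightarrow> 'n \<Rightarrow> bool) \<Rightarrow> bool" where
  "taylor_graph E \<longleftrightarrow> (\<exists>k bb::nat. bb < k - 1 \<and>
     distance_regular E 3 (\<lambda>i. [k, bb, 1] ! i) (\<lambda>i. [0, 1, bb, k] ! i))"

definition adj_matrix :: "('n::finite \<Rightarrow> 'n \<Rightarrow> bool) \<Rightarrow> complex^'n^'n" where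
  "adj_matrix E = (\<chi> y z. if E y z then 1 else 0)"

definition dual_idempotent ::
  "('n::finite \<Rightarrow> 'n \<Rightarrow> bool) \<Rightarrow> 'n \<Rightarrow> nat \<Rightarrow> complex^'n^'n" where
  "dual_idempotent E x i = (\<chi> y z. if y = z \<and> gdist E x y = i then 1 else 0)"

definition cmat_scale :: "complex \<Rightarrow> complex^'n^'n \<Rightarrow> complex^'n^'n" where
  "cmat_scale a M = (\<chi> i j. a * M $ i $ j)"

inductive_set gen_algebra :: "(complex^'n::finite^'n) set \<Rightarrow> (complex^'n^'n) set"
  for G where
  gen: "M \<in> G \<Longrightarrow> M \<in> gen_algebra G"
| one: "mat 1 \<in> gen_algebra G"
| add: "M \<in> gen_algebra G \<Longrightarrow> N \<in> gen_algebra G \<Longrightarrow> M + N \<in> gen_algebra G"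
| scale: "M \<in> gen_algebra G \<Longrightarrow> cmat_scale a M \<in> gen_algebra G"
| mult: "M \<in> gen_algebra G \<Longrightarrow> N \<in> gen_algebra G \<Longrightarrow> M ** N \<in> gen_algebra G"

definition terwilliger :: "('n::finite \<Rightarrow> 'n \<Rightarrow> bool) \<Rightarrow> 'n \<Rightarrow> (complex^'n^'n) set" where
  "terwilliger E x = gen_algebra (insert (adj_matrix E) (dual_idempotent E x ` {0..3}))"

end

theory Submission
  imports Defs
begin

text \<open>
  Fix a base vertex x and label each pair (y, z) of vertices by its distance triple
  (\<partial> x y, \<partial> x z, \<partial> y z). In a distance-regular graph every distance matrix A_l
  is a polynomial in A by the three-term recurrence, so the 0/1 matrices
  E*_i A_l E*_j of the fibres of this labelling lie in T(x), and they are linearly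
  independent. If moreover the number of neighbours w of y with prescribed distances to x and
  to z depends only on the triple of (y, z), then the span of the fibre matrices is closed under
  left multiplication by A and by the E*_i, hence equals T(x), and dim T(x) is the number of
  triples that occur.

  A Taylor graph is antipodal: every vertex u has a unique vertex u' at distance 3, and
  \<partial> w u' = 3 - \<partial> w u for all w. Replacing y or z by its antipode reflects both the triple and
  the neighbour counts, which reduces the counting condition to the case that y and z are
  adjacent to x, where it follows from the intersection numbers. Exactly 24 triples occur.
\<close>

section \<open>Matrices constant on the fibres of a labelling\<close>

interpretation cmat: vector_space "cmat_scale :: complex \<Rightarrow> complex^'n::finite^'n \<Rightarrow> complex^'n^'n"
  by unfold_locales (simp_all add: cmat_scale_def vec_eq_iff algebra_simps)

lemma cmat_scale_entry [simp]: "cmat_scale a M $ y $ z = a * M $ y $ z"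
  by (simp add: cmat_scale_def)

lemma matrix_mult_entry: "(M ** N) $ y $ z = (\<Sum>w\<in>UNIV. M $ y $ w * N $ w $ z)"
  by (simp add: matrix_matrix_mult_def)

lemma matrix_add_rdistrib: "(M + M') ** N = M ** N + M' ** (N :: complex^'n::finite^'n)"
  by (simp add: vec_eq_iff matrix_mult_entry sum.distrib distrib_right)

lemma cmat_scale_mult: "cmat_scale a M ** N = cmat_scale a (M ** N)"
  by (simp add: vec_eq_iff matrix_mult_entry sum_distrib_left mult.assoc)

lemma gen_algebra_subspace: "cmat.subspace (gen_algebra G)"
proof -
  have "0 = cmat_scale 0 (mat 1 :: complex^'n^'n)" by (simp add: vec_eq_iff)
  then have "0 \<in> gen_algebra G" by (metis gen_algebra.one gen_algebra.scale)
  then show ?thesis unfolding cmat.subspace_def by (blast intro: gen_algebra.add gen_algebra.scale)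
qed

lemma gen_algebra_subset:
  assumes "cmat.subspace S" "mat 1 \<in> S" "\<And>M N. M \<in> G \<Longrightarrow> N \<in> S \<Longrightarrow> M ** N \<in> S"
  shows "gen_algebra G \<subseteq> S"
proof -
  have "M ** N \<in> S" if "M \<in> gen_algebra G" "N \<in> S" for M N
    using that
  proof (induction arbitrary: N rule: gen_algebra.induct)
    case (add M M')
    then show ?case using assms(1) by (simp add: matrix_add_rdistrib cmat.subspace_add)
  next
    case (scale M a)
    then show ?case using assms(1) by (simp add: cmat_scale_mult cmat.subspace_scale)
  next
    case (mult M M')
    then show ?case by (simp add: matrix_mul_assoc[symmetric])
  qed (simp_all add: assms(3))
  then show ?thesis using assms(2) by (metis matrix_mul_rid subsetI)
qed

definition fibre_matrix :: "('n::finite \<Rightarrow> 'n \<Rightarrow> 'a) \<Rightarrow> 'a \<Rightarrow> complex^'n^'n" where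
  "fibre_matrix \<tau> t = (\<chi> y z. if \<tau> y z = t then 1 else 0)"

definition fibre_constant :: "('n::finite \<Rightarrow> 'n \<Rightarrow> 'a) \<Rightarrow> (complex^'n^'n) set" where
  "fibre_constant \<tau> = {M. \<exists>f. \<forall>y z. M $ y $ z = f (\<tau> y z)}"

lemma fibre_matrix_entry [simp]: "fibre_matrix \<tau> t $ y $ z = (if \<tau> y z = t then 1 else 0)"
  by (simp add: fibre_matrix_def)

lemma fibre_constantI:
  assumes "\<And>y z y' z'. \<tau> y z = \<tau> y' z' \<Longrightarrow> M $ y $ z = M $ y' $ z'"
  shows "M \<in> fibre_constant \<tau>"
proof -
  define rep where "rep t = (SOME p. case_prod \<tau> p = t)" for t
  have "M $ y $ z = M $ fst (rep (\<tau> y z)) $ snd (rep (\<tau> y z))" for y z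
  proof (rule assms)
    show "\<tau> y z = \<tau> (fst (rep (\<tau> y z))) (snd (rep (\<tau> y z)))"
      using someI[of "\<lambda>p. case_prod \<tau> p = \<tau> y z" "(y, z)"] unfolding rep_def
      by (simp add: case_prod_beta)
  qed
  then show ?thesis unfolding fibre_constant_def
    by (intro CollectI exI[of _ "\<lambda>t. M $ fst (rep t) $ snd (rep t)"]) blast
qed

lemma subspace_fibre_constant:
  fixes \<tau> :: "'n::finite \<Rightarrow> 'n \<Rightarrow> 'a"
  shows "cmat.subspace (fibre_constant \<tau>)"
proof -
  have "(0 :: complex^'n^'n) \<in> fibre_constant \<tau>"
    unfolding fibre_constant_def by (intro CollectI exI[of _ "\<lambda>_. 0"]) simp
  moreover have "M + N \<in> fibre_constant \<tau>"
    if MN: "M \<in> fibre_constant \<tau>" "N \<in> fibre_constant \<tau>" for M N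
  proof -
    obtain f g where "\<forall>y z. M $ y $ z = f (\<tau> y z)" "\<forall>y z. N $ y $ z = g (\<tau> y z)"
      using MN unfolding fibre_constant_def by blast
    then show ?thesis unfolding fibre_constant_def by (intro CollectI exI[of _ "\<lambda>t. f t + g t"]) simp
  qed
  moreover have "cmat_scale a M \<in> fibre_constant \<tau>" if M: "M \<in> fibre_constant \<tau>" for a M
  proof -
    obtain f where "\<forall>y z. M $ y $ z = f (\<tau> y z)"
      using M unfolding fibre_constant_def by blast
    then show ?thesis unfolding fibre_constant_def by (intro CollectI exI[of _ "\<lambda>t. a * f t"]) simp
  qed
  ultimately show ?thesis unfolding cmat.subspace_def by blast
qed

lemma inj_on_fibre_matrix: "inj_on (fibre_matrix \<tau>) (range (case_prod \<tau>))"
proof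
  fix s t assume "s \<in> range (case_prod \<tau>)" and eq: "fibre_matrix \<tau> s = fibre_matrix \<tau> t"
  then obtain y z where "s = \<tau> y z" by auto
  moreover have "fibre_matrix \<tau> s $ y $ z = fibre_matrix \<tau> t $ y $ z" using eq by simp
  ultimately show "s = t" by (simp split: if_splits)
qed

lemma fibre_constant_subset_span:
  "fibre_constant \<tau> \<subseteq> cmat.span (fibre_matrix \<tau> ` range (case_prod \<tau>))"
proof
  fix M assume "M \<in> fibre_constant \<tau>"
  then obtain f where f: "\<And>y z. M $ y $ z = f (\<tau> y z)" unfolding fibre_constant_def by blast
  have "M = (\<Sum>t\<in>range (case_prod \<tau>). cmat_scale (f t) (fibre_matrix \<tau> t))"
  proof (simp only: vec_eq_iff, intro allI)
    fix y z
    have "(\<Sum>t\<in>range (case_prod \<tau>). cmat_scale (f t) (fibre_matrix \<tau> t)) $ y $ z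
        = (\<Sum>t\<in>range (case_prod \<tau>). if t = \<tau> y z then f t else 0)"
      unfolding sum_component by (intro sum.cong) auto
    also have "\<dots> = f (\<tau> y z)" using rangeI[of "case_prod \<tau>" "(y, z)"] by simp
    finally show "M $ y $ z = (\<Sum>t\<in>range (case_prod \<tau>). cmat_scale (f t) (fibre_matrix \<tau> t)) $ y $ z"
      by (simp add: f)
  qed
  also have "\<dots> \<in> cmat.span (fibre_matrix \<tau> ` range (case_prod \<tau>))"
    by (intro cmat.span_sum cmat.span_scale cmat.span_base) auto
  finally show "M \<in> cmat.span (fibre_matrix \<tau> ` range (case_prod \<tau>))" .
qed

lemma independent_fibre_matrices: "cmat.independent (fibre_matrix \<tau> ` range (case_prod \<tau>))"
proof -
  let ?F = "fibre_matrix \<tau> ` range (case_prod \<tau>)"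
  have "c v = 0" if sum0: "(\<Sum>w\<in>?F. cmat_scale (c w) w) = 0" and "v \<in> ?F" for c v
  proof -
    obtain y z where v: "v = fibre_matrix \<tau> (\<tau> y z)" using \<open>v \<in> ?F\<close> by auto
    have entry: "w $ y $ z = (if w = v then 1 else 0)" if "w \<in> ?F" for w
    proof -
      obtain t where t: "t \<in> range (case_prod \<tau>)" "w = fibre_matrix \<tau> t" using \<open>w \<in> ?F\<close> by blast
      have "w = v \<longleftrightarrow> t = \<tau> y z"
        using inj_on_fibre_matrix[of \<tau>] t v rangeI[of "case_prod \<tau>" "(y, z)"]
        by (auto simp: inj_on_def)
      then show ?thesis using t by auto
    qed
    have "0 = (\<Sum>w\<in>?F. cmat_scale (c w) w) $ y $ z" using sum0 by simp
    also have "\<dots> = (\<Sum>w\<in>?F. if w = v then c w else 0)"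
      unfolding sum_component by (intro sum.cong) (auto simp: entry)
    also have "\<dots> = c v" using \<open>v \<in> ?F\<close> by simp
    finally show ?thesis by simp
  qed
  moreover have "finite ?F" by simp
  ultimately show ?thesis using cmat.dependent_finite by blast
qed

lemma dim_eq_card_fibres:
  assumes "cmat.subspace S" "fibre_matrix \<tau> ` range (case_prod \<tau>) \<subseteq> S" "S \<subseteq> fibre_constant \<tau>"
  shows "cmat.dim S = card (range (case_prod \<tau>))"
proof -
  have "S = cmat.span (fibre_matrix \<tau> ` range (case_prod \<tau>))"
    using assms fibre_constant_subset_span cmat.span_minimal by blast
  then have "cmat.dim S = card (fibre_matrix \<tau> ` range (case_prod \<tau>))"
    using independent_fibre_matrices cmat.dim_span_eq_card_independent by metis
  then show ?thesis using inj_on_fibre_matrix card_image by metis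
qed

section \<open>Distances in connected graphs\<close>

lemma card_eq_sum_card_fibres:
  assumes "finite A" "finite H" "f ` A \<subseteq> H"
  shows "card A = (\<Sum>h\<in>H. card {a\<in>A. f a = h})"
  unfolding card_eq_sum by (rule sum.group[OF assms, symmetric])

locale connected_simple_graph =
  fixes E :: "'n::finite \<Rightarrow> 'n \<Rightarrow> bool"
  assumes simple: "simple_graph E" and connected: "connected_graph E"
begin

abbreviation graph_distance :: "'n \<Rightarrow> 'n \<Rightarrow> nat" ("\<partial>") where "\<partial> \<equiv> gdist E"

lemma adj_sym: "E u v \<Longrightarrow> E v u"
  using simple unfolding simple_graph_def by blast

lemma not_adj_self: "\<not> E u u"
  using simple unfolding simple_graph_def by blast

lemma relpowp_sym: "(E ^^ n) u v \<Longrightarrow> (E ^^ n) v u"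
proof (induction n arbitrary: v)
  case (Suc n)
  then obtain w where "(E ^^ n) u w" "E w v" by (auto elim: relpowp_Suc_E)
  then show ?case using Suc.IH adj_sym by (meson relpowp_Suc_I2)
qed simp

lemma relpowp_gdist: "(E ^^ \<partial> u v) u v"
  using connected unfolding gdist_def connected_graph_def by (metis LeastI_ex)

lemma gdist_le: "(E ^^ n) u v \<Longrightarrow> \<partial> u v \<le> n"
  unfolding gdist_def by (rule Least_le)

lemma gdist_sym: "\<partial> u v = \<partial> v u"
  using gdist_le[OF relpowp_sym[OF relpowp_gdist]] by (metis le_antisym)

lemma gdist_eq_0_iff [simp]: "\<partial> u v = 0 \<longleftrightarrow> u = v"
  using relpowp_gdist[of u v] gdist_le[of 0 u v] by auto

lemma gdist_self [simp]: "\<partial> u u = 0"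
  by simp

lemma gdist_eq_1_iff: "\<partial> u v = 1 \<longleftrightarrow> E u v"
  using relpowp_gdist[of u v] gdist_le[of 1 u v] not_adj_self
  by (metis gdist_eq_0_iff le_neq_implies_less less_one relpowp_1)

lemma gdist_adj_le: "E v w \<Longrightarrow> \<partial> u w \<le> \<partial> u v + 1"
  using gdist_le[OF relpowp_Suc_I[OF relpowp_gdist]] by simp

lemma gdist_adj_ge: "E v w \<Longrightarrow> \<partial> u v \<le> \<partial> u w + 1"
  using gdist_adj_le adj_sym by blast

lemma gdist_SucE:
  assumes "\<partial> u v = Suc n"
  obtains w where "\<partial> u w = n" "E w v"
proof -
  from relpowp_gdist[of u v] assms obtain w where w: "(E ^^ n) u w" "E w v"
    by (auto elim: relpowp_Suc_E)
  with gdist_le[OF w(1)] gdist_adj_le[OF w(2), of u] assms have "\<partial> u w = n" by simp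
  with w(2) that show thesis by blast
qed

lemma gdist_attained_below: "i \<le> \<partial> u v \<Longrightarrow> \<exists>w. \<partial> u w = i"
proof (induction "\<partial> u v" arbitrary: v)
  case (Suc n)
  then show ?case by (metis gdist_SucE le_SucE)
qed simp

lemma nbrs_at_gdist_self: "{w. E y w \<and> \<partial> y w = h} = (if h = 1 then {w. E y w} else {})"
  using gdist_eq_1_iff by auto

lemma nbrs_at_gdist_empty:
  "h + 1 < \<partial> z y \<or> \<partial> z y + 1 < h \<Longrightarrow> {w. E y w \<and> \<partial> z w = h} = {}"
  using gdist_adj_le[of y _ z] gdist_adj_ge[of y _ z] by fastforce

lemma card_nbrs_split:
  assumes "1 \<le> \<partial> z y"
  shows "card {w. E y w} = card {w. E y w \<and> \<partial> z w = \<partial> z y - 1}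
    + card {w. E y w \<and> \<partial> z w = \<partial> z y} + card {w. E y w \<and> \<partial> z w = \<partial> z y + 1}"
proof -
  let ?l = "\<partial> z y"
  have "\<partial> z ` {w. E y w} \<subseteq> {?l - 1, ?l, ?l + 1}"
    using gdist_adj_le[of y _ z] gdist_adj_ge[of y _ z] assms by fastforce
  then have "card {w. E y w} = (\<Sum>h\<in>{?l - 1, ?l, ?l + 1}. card {w\<in>{w. E y w}. \<partial> z w = h})"
    by (intro card_eq_sum_card_fibres) auto
  moreover have "?l - 1 \<notin> {?l, ?l + 1}" "?l \<notin> {?l + 1}" using assms by auto
  ultimately show ?thesis by (simp add: add.assoc)
qed

abbreviation distance_matrix :: "nat \<Rightarrow> complex^'n^'n" where
  "distance_matrix l \<equiv> fibre_matrix \<partial> l"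

lemma adj_matrix_eq_distance_matrix: "adj_matrix E = distance_matrix 1"
  using gdist_eq_1_iff by (auto simp: vec_eq_iff adj_matrix_def)

lemma mat_1_eq_distance_matrix: "mat 1 = distance_matrix 0"
  by (simp add: vec_eq_iff mat_def)

lemma adj_mult_distance_matrix_entry:
  "(adj_matrix E ** distance_matrix m) $ y $ z = of_nat (card {w. E y w \<and> \<partial> z w = m})"
proof -
  have "(adj_matrix E ** distance_matrix m) $ y $ z = (\<Sum>w\<in>UNIV. if E y w \<and> \<partial> z w = m then 1 else 0)"
    unfolding matrix_mult_entry adj_matrix_def by (intro sum.cong) (auto simp: gdist_sym)
  then show ?thesis by (simp add: sum.If_cases)
qed

end

section \<open>Distance-regular graphs\<close>

locale distance_regular_graph =
  fixes E :: "'n::finite \<Rightarrow> 'n \<Rightarrow> bool" and D :: nat and b c :: "nat \<Rightarrow> nat"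
  assumes distance_regular: "distance_regular E D b c"

sublocale distance_regular_graph \<subseteq> connected_simple_graph
  using distance_regular by unfold_locales (simp_all add: distance_regular_def)

context distance_regular_graph
begin

lemma gdist_le_diameter: "\<partial> u v \<le> D"
  using distance_regular unfolding distance_regular_def by blast

lemma diameter_attained: "\<exists>u v. \<partial> u v = D"
  using distance_regular unfolding distance_regular_def by blast

lemma card_nbrs_farther:
  "\<partial> z y < D \<Longrightarrow> card {w. E y w \<and> \<partial> z w = \<partial> z y + 1} = b (\<partial> z y)"
  using distance_regular unfolding distance_regular_def Let_def by (simp add: conj_commute)

lemma card_nbrs_closer:
  "1 \<le> \<partial> z y \<Longrightarrow> card {w. E y w \<and> \<partial> z w = \<partial> z y - 1} = c (\<partial> z y)"
  using distance_regular unfolding distance_regular_def Let_def by (simp add: conj_commute)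

lemma card_nbrs: "0 < D \<Longrightarrow> card {w. E y w} = b 0"
  using card_nbrs_farther[of y y] by (simp add: nbrs_at_gdist_self)

lemma card_nbrs_eq: "card {w. E y w} = card {w. E y' w}"
proof (cases "D = 0")
  case True
  then have "y = y'" using gdist_le_diameter[of y y'] by simp
  then show ?thesis by simp
qed (simp add: card_nbrs)

lemma card_nbrs_at_gdist_cong:
  assumes "\<partial> z y = \<partial> z' y'"
  shows "card {w. E y w \<and> \<partial> z w = h} = card {w. E y' w \<and> \<partial> z' w = h}"
proof (cases "\<partial> z y = 0")
  case True
  then have "y = z" "y' = z'" using assms by auto
  then show ?thesis using card_nbrs_eq[of z z'] by (simp add: nbrs_at_gdist_self)
next
  case False
  let ?l = "\<partial> z y"
  have farther: "card {w. E y w \<and> \<partial> z w = ?l + 1} = card {w. E y' w \<and> \<partial> z' w = ?l + 1}"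
  proof (cases "?l < D")
    case True
    then show ?thesis using card_nbrs_farther[of z y] card_nbrs_farther[of z' y'] assms by simp
  next
    case False
    then have "\<partial> z w \<noteq> ?l + 1" "\<partial> z' w \<noteq> ?l + 1" for w
      using gdist_le_diameter[of z w] gdist_le_diameter[of z' w] assms by auto
    then show ?thesis by simp
  qed
  have closer: "card {w. E y w \<and> \<partial> z w = ?l - 1} = card {w. E y' w \<and> \<partial> z' w = ?l - 1}"
    using card_nbrs_closer[of z y] card_nbrs_closer[of z' y'] assms False by simp
  have level: "card {w. E y w \<and> \<partial> z w = ?l} = card {w. E y' w \<and> \<partial> z' w = ?l}"
    using card_nbrs_split[of z y] card_nbrs_split[of z' y'] card_nbrs_eq[of y y'] farther closer assms False
    by simp
  consider "h = ?l - 1" | "h = ?l" | "h = ?l + 1" | "h + 1 < ?l \<or> ?l + 1 < h" by linarith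
  then show ?thesis
  proof cases
    case 4
    then have "{w. E y w \<and> \<partial> z w = h} = {}" "{w. E y' w \<and> \<partial> z' w = h} = {}"
      using nbrs_at_gdist_empty assms by metis+
    then show ?thesis by (metis card.empty)
  qed (use farther closer level assms in simp_all)
qed

lemma c_pos:
  assumes "1 \<le> i" "i \<le> D"
  shows "0 < c i"
proof -
  obtain u v where "\<partial> u v = D" using diameter_attained by blast
  then obtain y where y: "\<partial> u y = i" using gdist_attained_below assms(2) by metis
  with assms(1) obtain w where "\<partial> u w = i - 1" "E w y"
    using gdist_SucE[of u y "i - 1"] by auto
  then have "w \<in> {w. E y w \<and> \<partial> u w = \<partial> u y - 1}" using y adj_sym by auto
  then show ?thesis using card_nbrs_closer[of u y] y assms(1) card_gt_0_iff by fastforce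
qed

lemma b_pos:
  assumes "i < D"
  shows "0 < b i"
proof -
  obtain u v where "\<partial> u v = D" using diameter_attained by blast
  then obtain y where y: "\<partial> u y = Suc i" using gdist_attained_below assms by (metis Suc_leI)
  then obtain w where w: "\<partial> u w = i" "E w y" by (rule gdist_SucE)
  then have "y \<in> {v. E w v \<and> \<partial> u v = \<partial> u w + 1}" using y by auto
  then show ?thesis using card_nbrs_farther[of u w] w assms card_gt_0_iff by fastforce
qed

lemma gdist_attained: "i \<le> D \<Longrightarrow> \<exists>v. \<partial> u v = i"
proof (induction i)
  case (Suc i)
  then obtain v where v: "\<partial> u v = i" by auto
  with Suc.prems b_pos[of i] have "0 < card {w. E v w \<and> \<partial> u w = \<partial> u v + 1}"
    using card_nbrs_farther[of u v] by simp
  then show ?case using v card_gt_0_iff by fastforce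
qed auto

end

section \<open>The Terwilliger algebra of a distance-regular graph\<close>

definition dist_triple :: "('n \<Rightarrow> 'n \<Rightarrow> bool) \<Rightarrow> 'n \<Rightarrow> 'n \<Rightarrow> 'n \<Rightarrow> nat \<times> nat \<times> nat" where
  "dist_triple E x y z = (gdist E x y, gdist E x z, gdist E y z)"

definition triple_count :: "('n \<Rightarrow> 'n \<Rightarrow> bool) \<Rightarrow> 'n \<Rightarrow> 'n \<Rightarrow> 'n \<Rightarrow> nat \<Rightarrow> nat \<Rightarrow> nat" where
  "triple_count E x y z i j = card {w. E y w \<and> gdist E x w = i \<and> gdist E z w = j}"

lemma dual_idempotent_mult_entry:
  "(dual_idempotent E x i ** M) $ y $ z = (if gdist E x y = i then M $ y $ z else 0)"
proof -
  have "(dual_idempotent E x i ** M) $ y $ z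
      = (\<Sum>w\<in>UNIV. if w = y then (if gdist E x y = i then M $ y $ z else 0) else 0)"
    unfolding matrix_mult_entry dual_idempotent_def by (intro sum.cong) auto
  then show ?thesis by simp
qed

lemma mult_dual_idempotent_entry:
  "(M ** dual_idempotent E x j) $ y $ z = (if gdist E x z = j then M $ y $ z else 0)"
proof -
  have "(M ** dual_idempotent E x j) $ y $ z
      = (\<Sum>w\<in>UNIV. if w = z then (if gdist E x z = j then M $ y $ z else 0) else 0)"
    unfolding matrix_mult_entry dual_idempotent_def by (intro sum.cong) auto
  then show ?thesis by simp
qed

lemma fibre_matrix_dist_triple:
  "fibre_matrix (dist_triple E x) (i, j, l)
     = dual_idempotent E x i ** fibre_matrix (gdist E) l ** dual_idempotent E x j"
  by (simp add: vec_eq_iff dist_triple_def dual_idempotent_mult_entry mult_dual_idempotent_entry)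

lemma dual_idempotent_mult_fibre_constant:
  assumes "M \<in> fibre_constant (dist_triple E x)"
  shows "dual_idempotent E x i ** M \<in> fibre_constant (dist_triple E x)"
proof -
  obtain f where "\<forall>y z. M $ y $ z = f (dist_triple E x y z)"
    using assms unfolding fibre_constant_def by blast
  then show ?thesis unfolding fibre_constant_def
    by (intro CollectI exI[of _ "\<lambda>(h, j, l). if h = i then f (h, j, l) else 0"])
      (simp add: dual_idempotent_mult_entry dist_triple_def)
qed

context connected_simple_graph
begin

lemma mat_1_in_fibre_constant: "mat 1 \<in> fibre_constant (dist_triple E x)"
  by (rule fibre_constantI) (simp add: mat_def dist_triple_def, metis gdist_eq_0_iff)

lemma adj_mult_fibre_constant:
  assumes "\<And>y z y' z'. dist_triple E x y z = dist_triple E x y' z' \<Longrightarrow>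
      triple_count E x y z = triple_count E x y' z'"
    and "M \<in> fibre_constant (dist_triple E x)"
  shows "adj_matrix E ** M \<in> fibre_constant (dist_triple E x)"
proof -
  obtain f where f0: "\<forall>w z. M $ w $ z = f (dist_triple E x w z)"
    using assms(2) unfolding fibre_constant_def by blast
  have f: "M $ w $ z = f (\<partial> x w, \<partial> x z, \<partial> z w)" for w z
  proof -
    have "M $ w $ z = f (\<partial> x w, \<partial> x z, \<partial> w z)" using f0 by (simp add: dist_triple_def)
    then show ?thesis by (metis gdist_sym)
  qed
  let ?V = "range (case_prod \<partial>)"
  have entry: "(adj_matrix E ** M) $ y $ z
      = (\<Sum>(i, j)\<in>?V \<times> ?V. of_nat (triple_count E x y z i j) * f (i, \<partial> x z, j))" for y z
  proof -
    have "(adj_matrix E ** M) $ y $ z = (\<Sum>w\<in>UNIV. if E y w then f (\<partial> x w, \<partial> x z, \<partial> z w) else 0)"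
      unfolding matrix_mult_entry adj_matrix_def f by (intro sum.cong) auto
    also have "\<dots> = (\<Sum>w\<in>{w. E y w}. f (\<partial> x w, \<partial> x z, \<partial> z w))"
      by (simp add: sum.If_cases)
    also have "\<dots> = (\<Sum>p\<in>?V \<times> ?V.
        \<Sum>w\<in>{w\<in>{w. E y w}. (\<partial> x w, \<partial> z w) = p}. f (\<partial> x w, \<partial> x z, \<partial> z w))"
      by (rule sum.group[symmetric]) auto
    also have "\<dots> = (\<Sum>(i, j)\<in>?V \<times> ?V. of_nat (triple_count E x y z i j) * f (i, \<partial> x z, j))"
    proof (intro sum.cong refl, clarify)
      fix i j
      have "{w\<in>{w. E y w}. (\<partial> x w, \<partial> z w) = (i, j)} = {w. E y w \<and> \<partial> x w = i \<and> \<partial> z w = j}"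
        by auto
      then show "(\<Sum>w\<in>{w\<in>{w. E y w}. (\<partial> x w, \<partial> z w) = (i, j)}. f (\<partial> x w, \<partial> x z, \<partial> z w))
          = of_nat (triple_count E x y z i j) * f (i, \<partial> x z, j)"
        by (simp add: triple_count_def)
    qed
    finally show ?thesis .
  qed
  show ?thesis
  proof (rule fibre_constantI)
    fix y z y' z' assume same: "dist_triple E x y z = dist_triple E x y' z'"
    then have "triple_count E x y z = triple_count E x y' z'" by (rule assms(1))
    moreover have "\<partial> x z = \<partial> x z'" using same by (simp add: dist_triple_def)
    ultimately show "(adj_matrix E ** M) $ y $ z = (adj_matrix E ** M) $ y' $ z'"
      unfolding entry by simp
  qed
qed

end

context distance_regular_graph
begin

abbreviation T :: "'n \<Rightarrow> (complex^'n^'n) set" where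
  "T x \<equiv> gen_algebra (insert (adj_matrix E) (dual_idempotent E x ` {..D}))"

lemma three_term_recurrence:
  "\<exists>\<beta> \<alpha>. adj_matrix E ** distance_matrix (l + 1)
     = cmat_scale \<beta> (distance_matrix l) + cmat_scale \<alpha> (distance_matrix (l + 1))
       + cmat_scale (of_nat (c (l + 2))) (distance_matrix (l + 2))"
proof -
  let ?M = "adj_matrix E ** distance_matrix (l + 1)"
  have "?M \<in> fibre_constant \<partial>"
  proof (rule fibre_constantI)
    fix y z y' z' assume "\<partial> y z = \<partial> y' z'"
    then have "\<partial> z y = \<partial> z' y'" by (metis gdist_sym)
    then have "card {w. E y w \<and> \<partial> z w = l + 1} = card {w. E y' w \<and> \<partial> z' w = l + 1}"
      by (rule card_nbrs_at_gdist_cong)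
    then show "?M $ y $ z = ?M $ y' $ z'"
      unfolding adj_mult_distance_matrix_entry by simp
  qed
  then obtain g where g: "\<And>y z. ?M $ y $ z = g (\<partial> y z)"
    unfolding fibre_constant_def by blast
  have "?M $ y $ z = (cmat_scale (g l) (distance_matrix l) + cmat_scale (g (l + 1)) (distance_matrix (l + 1))
       + cmat_scale (of_nat (c (l + 2))) (distance_matrix (l + 2))) $ y $ z" for y z
  proof -
    have sym: "\<partial> z y = \<partial> y z" by (rule gdist_sym)
    have entry: "?M $ y $ z = of_nat (card {w. E y w \<and> \<partial> z w = l + 1})"
      by (rule adj_mult_distance_matrix_entry)
    consider "\<partial> y z = l" | "\<partial> y z = l + 1" | "\<partial> y z = l + 2" | "l + 2 < \<partial> y z \<or> \<partial> y z + 1 < l + 1"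
      by linarith
    then show ?thesis
    proof cases
      case 3
      then show ?thesis using entry card_nbrs_closer[of z y] sym by simp
    next
      case 4
      then show ?thesis using entry nbrs_at_gdist_empty[of "l + 1" z y] sym by auto
    qed (use g[of y z] in simp_all)
  qed
  then show ?thesis by (auto simp: vec_eq_iff)
qed

lemma distance_matrix_in_T: "l \<le> D \<Longrightarrow> distance_matrix l \<in> T x"
proof (induction l rule: less_induct)
  case (less l)
  consider "l = 0" | "l = 1" | m where "l = m + 2"
    by (metis One_nat_def add_2_eq_Suc' not0_implies_Suc)
  then show ?case
  proof cases
    case 1
    then show ?thesis using gen_algebra.one mat_1_eq_distance_matrix by metis
  next
    case 2
    then show ?thesis using gen_algebra.gen adj_matrix_eq_distance_matrix by (metis insertI1)
  next
    case 3
    obtain \<beta> \<alpha> where recurrence: "adj_matrix E ** distance_matrix (m + 1)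
        = cmat_scale \<beta> (distance_matrix m) + cmat_scale \<alpha> (distance_matrix (m + 1))
          + cmat_scale (of_nat (c (m + 2))) (distance_matrix (m + 2))"
      using three_term_recurrence by blast
    have "c (m + 2) \<noteq> 0" using c_pos[of "m + 2"] less.prems 3 by simp
    then have recursion: "distance_matrix (m + 2) = cmat_scale (1 / of_nat (c (m + 2)))
        (adj_matrix E ** distance_matrix (m + 1) + cmat_scale (- \<beta>) (distance_matrix m)
          + cmat_scale (- \<alpha>) (distance_matrix (m + 1)))"
      unfolding recurrence by (simp add: vec_eq_iff field_simps)
    moreover have "distance_matrix m \<in> T x" "distance_matrix (m + 1) \<in> T x"
      using less 3 by auto
    ultimately show ?thesis unfolding 3 recursion
      by (intro gen_algebra.scale gen_algebra.add gen_algebra.mult) (auto intro: gen_algebra.gen)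
  qed
qed

lemma fibre_matrix_dist_triple_in_T:
  assumes "t \<in> range (case_prod (dist_triple E x))"
  shows "fibre_matrix (dist_triple E x) t \<in> T x"
proof -
  obtain y z where t: "t = (\<partial> x y, \<partial> x z, \<partial> y z)" using assms by (auto simp: dist_triple_def)
  have "dual_idempotent E x (\<partial> x y) \<in> T x" "dual_idempotent E x (\<partial> x z) \<in> T x"
    using gdist_le_diameter by (auto intro: gen_algebra.gen)
  moreover have "distance_matrix (\<partial> y z) \<in> T x"
    using gdist_le_diameter by (rule distance_matrix_in_T)
  ultimately show ?thesis unfolding t fibre_matrix_dist_triple by (intro gen_algebra.mult)
qed

theorem dim_T_eq_card_dist_triples:
  assumes "\<And>y z y' z'. dist_triple E x y z = dist_triple E x y' z' \<Longrightarrow>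
    triple_count E x y z = triple_count E x y' z'"
  shows "cmat.dim (T x) = card (range (case_prod (dist_triple E x)))"
proof (rule dim_eq_card_fibres)
  show "cmat.subspace (T x)" by (rule gen_algebra_subspace)
  show "fibre_matrix (dist_triple E x) ` range (case_prod (dist_triple E x)) \<subseteq> T x"
    using fibre_matrix_dist_triple_in_T by blast
  show "T x \<subseteq> fibre_constant (dist_triple E x)"
    by (rule gen_algebra_subset)
      (auto intro: subspace_fibre_constant mat_1_in_fibre_constant adj_mult_fibre_constant[OF assms]
        dual_idempotent_mult_fibre_constant)
qed

lemma triple_count_eqI:
  assumes "\<And>i j. i \<le> D \<Longrightarrow> j \<le> D \<Longrightarrow> triple_count E x y z i j = triple_count E x y' z' i j"
  shows "triple_count E x y z = triple_count E x y' z'"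
proof (intro ext)
  fix i j
  show "triple_count E x y z i j = triple_count E x y' z' i j"
  proof (cases "i \<le> D \<and> j \<le> D")
    case False
    then have "\<partial> x w \<noteq> i \<or> \<partial> u w \<noteq> j" for u w using gdist_le_diameter by (metis le_trans nle_le)
    then show ?thesis unfolding triple_count_def by (metis (lifting) Collect_empty_eq)
  qed (rule assms; simp)
qed

end

section \<open>Taylor graphs\<close>

definition taylor_triples :: "(nat \<times> nat \<times> nat) set" where
  "taylor_triples = {(0, 0, 0), (0, 1, 1), (0, 2, 2), (0, 3, 3), (1, 0, 1), (2, 0, 2), (3, 0, 3),
     (3, 1, 2), (3, 2, 1), (3, 3, 0), (1, 3, 2), (2, 3, 1),
     (1, 1, 0), (1, 1, 1), (1, 1, 2), (2, 2, 0), (2, 2, 1), (2, 2, 2),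
     (1, 2, 1), (1, 2, 2), (1, 2, 3), (2, 1, 1), (2, 1, 2), (2, 1, 3)}"

lemma card_taylor_triples: "card taylor_triples = 24"
  by (simp add: taylor_triples_def)

lemma mem_taylor_triples:
  assumes "i \<le> 3" "j \<le> 3" "l \<le> 3"
    and "i = 0 \<Longrightarrow> l = j" "j = 0 \<Longrightarrow> l = i" "i = 3 \<Longrightarrow> l = 3 - j" "j = 3 \<Longrightarrow> l = 3 - i"
    and "i = j \<Longrightarrow> l \<le> 2" "i \<noteq> j \<Longrightarrow> l \<noteq> 0"
  shows "(i, j, l) \<in> taylor_triples"
proof -
  have "i = 0 \<or> i = 1 \<or> i = 2 \<or> i = 3" "j = 0 \<or> j = 1 \<or> j = 2 \<or> j = 3"
    "l = 0 \<or> l = 1 \<or> l = 2 \<or> l = 3"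
    using assms(1-3) by auto
  then show ?thesis using assms(4-) unfolding taylor_triples_def by (elim disjE) simp_all
qed

locale taylor =
  fixes E :: "'n::finite \<Rightarrow> 'n \<Rightarrow> bool" and k \<mu> :: nat
  assumes mu_less: "\<mu> < k - 1"
    and intersection_array: "distance_regular E 3 (\<lambda>i. [k, \<mu>, 1] ! i) (\<lambda>i. [0, 1, \<mu>, k] ! i)"

sublocale taylor \<subseteq> distance_regular_graph E 3 "\<lambda>i. [k, \<mu>, 1] ! i" "\<lambda>i. [0, 1, \<mu>, k] ! i"
  by (rule distance_regular_graph.intro) (rule intersection_array)

context taylor
begin

lemma valency: "card {w. E y w} = k"
  using card_nbrs[of y] by simp

lemma mu_pos: "0 < \<mu>"
  using c_pos[of 2] by simp

lemma card_sphere_2: "card {z. \<partial> u z = 2} = k"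
proof -
  let ?S1 = "{y. \<partial> u y = 1}" and ?S2 = "{z. \<partial> u z = 2}"
  have "(\<Sum>y\<in>?S1. card {z\<in>?S2. E y z}) = \<mu> * card ?S2"
  proof (rule sum_multicount)
    show "\<forall>z\<in>?S2. card {y\<in>?S1. E y z} = \<mu>"
    proof
      fix z assume "z \<in> ?S2"
      moreover have "{y\<in>?S1. E y z} = {w. E z w \<and> \<partial> u w = \<partial> u z - 1}"
        using \<open>z \<in> ?S2\<close> adj_sym by auto
      ultimately show "card {y\<in>?S1. E y z} = \<mu>" using card_nbrs_closer[of u z] by simp
    qed
  qed auto
  moreover have "(\<Sum>y\<in>?S1. card {z\<in>?S2. E y z}) = (\<Sum>y\<in>?S1. \<mu>)"
  proof (rule sum.cong)
    fix y assume "y \<in> ?S1"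
    then have "{z\<in>?S2. E y z} = {w. E y w \<and> \<partial> u w = \<partial> u y + 1}" by auto
    then show "card {z\<in>?S2. E y z} = \<mu>" using card_nbrs_farther[of u y] \<open>y \<in> ?S1\<close> by simp
  qed simp
  moreover have "card ?S1 = k" using valency[of u] gdist_eq_1_iff by simp
  ultimately show ?thesis using mu_pos by simp
qed

lemma nbrs_eq_sphere_2:
  assumes "\<partial> u v = 3"
  shows "{w. E v w} = {w. \<partial> u w = 2}"
proof -
  have "card {w. E v w \<and> \<partial> u w = 2} = card {w. E v w}"
    using card_nbrs_closer[of u v] assms valency by simp
  then have "{w. E v w \<and> \<partial> u w = 2} = {w. E v w}" by (intro card_subset_eq) auto
  then have "{w. E v w} \<subseteq> {w. \<partial> u w = 2}" by blast
  then show ?thesis using card_sphere_2 valency by (intro card_subset_eq) auto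
qed

lemma gdist_3_unique:
  assumes "\<partial> u v = 3" "\<partial> u v' = 3"
  shows "v = v'"
proof -
  obtain w where w: "\<partial> u w = 2" using gdist_attained by fastforce
  then have "E v w" "E v' w" using nbrs_eq_sphere_2[OF assms(1)] nbrs_eq_sphere_2[OF assms(2)] by auto
  then have "v \<in> {z. E w z \<and> \<partial> u z = \<partial> u w + 1}" "v' \<in> {z. E w z \<and> \<partial> u z = \<partial> u w + 1}"
    using w assms adj_sym by auto
  moreover have "card {z. E w z \<and> \<partial> u z = \<partial> u w + 1} = 1" using card_nbrs_farther[of u w] w by simp
  ultimately show ?thesis by (metis card_1_singletonE singletonD)
qed

definition antipode :: "'n \<Rightarrow> 'n" where
  "antipode u = (THE v. \<partial> u v = 3)"

lemma gdist_eq_3_iff: "\<partial> u v = 3 \<longleftrightarrow> v = antipode u"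
proof -
  obtain v0 where v0: "\<partial> u v0 = 3" using gdist_attained by fastforce
  have "\<partial> u (antipode u) = 3"
    unfolding antipode_def by (rule theI[of _ v0]) (use v0 gdist_3_unique in blast)+
  then show ?thesis using gdist_3_unique by blast
qed

lemma antipode_antipode [simp]: "antipode (antipode u) = u"
  by (metis gdist_eq_3_iff gdist_sym)

lemma nbrs_antipode: "E (antipode u) w \<longleftrightarrow> \<partial> u w = 2"
  using nbrs_eq_sphere_2[of u "antipode u"] gdist_eq_3_iff by auto

lemma gdist_antipode: "\<partial> w (antipode u) = 3 - \<partial> w u"
proof -
  consider "\<partial> u w = 0" | "\<partial> u w = 1" | "\<partial> u w = 2" | "\<partial> u w = 3"
    using gdist_le_diameter[of u w] by linarith
  then show ?thesis
  proof cases
    case 1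
    then show ?thesis using gdist_eq_3_iff by auto
  next
    case 2
    have "\<partial> w (antipode u) \<noteq> 0" using 2 gdist_eq_3_iff[of u w] by auto
    moreover have "\<partial> w (antipode u) \<noteq> 1"
      using 2 nbrs_antipode[of u w] gdist_eq_1_iff[of "antipode u" w] gdist_sym[of w "antipode u"] by auto
    moreover have "\<partial> w (antipode u) \<noteq> 3"
      using 2 gdist_eq_3_iff[of "antipode u" w] gdist_sym[of w "antipode u"] by auto
    ultimately show ?thesis using 2 gdist_le_diameter[of w "antipode u"] gdist_sym[of w u] by linarith
  next
    case 3
    then show ?thesis
      using nbrs_antipode[of u w] gdist_eq_1_iff[of "antipode u" w] gdist_sym[of w "antipode u"]
        gdist_sym[of w u] by simp
  next
    case 4
    then show ?thesis using gdist_eq_3_iff[of u w] gdist_sym[of w u] by simp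
  qed
qed

lemma gdist_antipode_left: "\<partial> (antipode u) w = 3 - \<partial> u w"
  using gdist_antipode gdist_sym by metis

lemma gdist_antipode_antipode: "\<partial> (antipode u) (antipode v) = \<partial> u v"
  using gdist_antipode_left[of u "antipode v"] gdist_antipode[of u v] gdist_le_diameter[of u v] by simp

lemma adj_antipode_antipode: "E (antipode u) (antipode v) \<longleftrightarrow> E u v"
  using gdist_antipode[of "antipode u" v] gdist_antipode_left[of u v] gdist_le_diameter[of u v]
  by (metis diff_diff_cancel gdist_eq_1_iff)

lemma card_antipode: "card {v. P (antipode v)} = card {w. P w}"
proof -
  have "inj antipode" by (metis antipode_antipode injI)
  moreover have "{v. P (antipode v)} = antipode -` {w. P w}" by auto
  ultimately show ?thesis by (metis card_vimage_inj antipode_antipode rangeI subsetI)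
qed

lemma triple_count_antipode_left:
  assumes "h \<le> 3" "j \<le> 3"
  shows "triple_count E x (antipode y) z h j = triple_count E x y z (3 - h) (3 - j)"
proof -
  have "E (antipode y) (antipode v) \<and> \<partial> x (antipode v) = h \<and> \<partial> z (antipode v) = j
      \<longleftrightarrow> E y v \<and> \<partial> x v = 3 - h \<and> \<partial> z v = 3 - j" for v
    using assms gdist_le_diameter[of x v] gdist_le_diameter[of z v]
    by (auto simp: adj_antipode_antipode gdist_antipode)
  then show ?thesis unfolding triple_count_def
    using card_antipode[of "\<lambda>w. E (antipode y) w \<and> \<partial> x w = h \<and> \<partial> z w = j"] by simp
qed

lemma triple_count_antipode_right:
  assumes "j \<le> 3"
  shows "triple_count E x y (antipode z) h j = triple_count E x y z h (3 - j)"
proof -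
  have "\<partial> (antipode z) w = j \<longleftrightarrow> \<partial> z w = 3 - j" for w
    using assms gdist_le_diameter[of z w] by (auto simp: gdist_antipode_left)
  then show ?thesis unfolding triple_count_def by simp
qed

lemma triple_count_cong_antipode_left:
  assumes "triple_count E x (antipode y) z = triple_count E x (antipode y') z'"
  shows "triple_count E x y z = triple_count E x y' z'"
proof (rule triple_count_eqI)
  fix i j :: nat assume "i \<le> 3" "j \<le> 3"
  then show "triple_count E x y z i j = triple_count E x y' z' i j"
    using triple_count_antipode_left[of "3 - i" "3 - j" x y z]
      triple_count_antipode_left[of "3 - i" "3 - j" x y' z'] assms by simp
qed

lemma triple_count_cong_antipode_right:
  assumes "triple_count E x y (antipode z) = triple_count E x y' (antipode z')"
  shows "triple_count E x y z = triple_count E x y' z'"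
proof (rule triple_count_eqI)
  fix i j :: nat assume "j \<le> 3"
  then show "triple_count E x y z i j = triple_count E x y' z' i j"
    using triple_count_antipode_right[of "3 - j" x y z i]
      triple_count_antipode_right[of "3 - j" x y' z' i] assms by simp
qed

lemma card_nbrs_eq_sum_triple_count:
  assumes "\<partial> x y = 1"
  shows "card {w. E y w \<and> \<partial> z w = j}
    = triple_count E x y z 0 j + triple_count E x y z 1 j + triple_count E x y z 2 j"
proof -
  have "\<partial> x ` {w. E y w \<and> \<partial> z w = j} \<subseteq> {0, 1, 2}"
    using gdist_adj_le[of y _ x] assms by fastforce
  then have "card {w. E y w \<and> \<partial> z w = j}
      = (\<Sum>i\<in>{0, 1, 2}. card {w\<in>{w. E y w \<and> \<partial> z w = j}. \<partial> x w = i})"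
    by (intro card_eq_sum_card_fibres) auto
  moreover have "{w\<in>{w. E y w \<and> \<partial> z w = j}. \<partial> x w = i} = {w. E y w \<and> \<partial> x w = i \<and> \<partial> z w = j}" for i
    by auto
  ultimately show ?thesis unfolding triple_count_def by simp
qed

lemma card_local_nbrs_eq_sum_triple_count:
  assumes "\<partial> x z = 1"
  shows "card {w. E y w \<and> \<partial> x w = 1}
    = triple_count E x y z 1 0 + triple_count E x y z 1 1 + triple_count E x y z 1 2"
proof -
  have "\<partial> z w \<le> 2" if "\<partial> x w = 1" for w
    using gdist_adj_le[of x w z] that assms gdist_eq_1_iff gdist_sym[of z x] by simp
  then have "\<partial> z ` {w. E y w \<and> \<partial> x w = 1} \<subseteq> {0, 1, 2}" by fastforce
  then have "card {w. E y w \<and> \<partial> x w = 1}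
      = (\<Sum>j\<in>{0, 1, 2}. card {w\<in>{w. E y w \<and> \<partial> x w = 1}. \<partial> z w = j})"
    by (intro card_eq_sum_card_fibres) auto
  moreover have "{w\<in>{w. E y w \<and> \<partial> x w = 1}. \<partial> z w = j} = {w. E y w \<and> \<partial> x w = 1 \<and> \<partial> z w = j}" for j
    by auto
  ultimately show ?thesis unfolding triple_count_def by simp
qed

lemma triple_count_0:
  assumes "\<partial> x y = 1" "\<partial> x z = 1"
  shows "triple_count E x y z 0 j = (if j = 1 then 1 else 0)"
proof -
  have "{w. E y w \<and> \<partial> x w = 0 \<and> \<partial> z w = j} = (if j = 1 then {x} else {})"
    using assms gdist_eq_1_iff adj_sym gdist_sym[of z x] by auto
  then show ?thesis unfolding triple_count_def by simp
qed

lemma triple_count_3: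
  assumes "\<partial> x y = 1"
  shows "triple_count E x y z 3 j = 0"
proof -
  have "{w. E y w \<and> \<partial> x w = 3 \<and> \<partial> z w = j} = {}"
    using gdist_adj_le[of y _ x] assms by fastforce
  then show ?thesis unfolding triple_count_def by simp
qed

lemma triple_count_1_0: "\<partial> x z = 1 \<Longrightarrow> triple_count E x y z 1 0 = (if E y z then 1 else 0)"
proof -
  assume "\<partial> x z = 1"
  then have "{w. E y w \<and> \<partial> x w = 1 \<and> \<partial> z w = 0} = (if E y z then {z} else {})" by auto
  then show ?thesis unfolding triple_count_def by simp
qed

lemma triple_count_1_3: "\<partial> x z = 1 \<Longrightarrow> triple_count E x y z 1 3 = 0"
proof -
  assume "\<partial> x z = 1"
  then have "\<partial> z w \<le> 2" if "\<partial> x w = 1" for w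
    using gdist_adj_le[of x w z] that gdist_eq_1_iff gdist_sym[of z x] by simp
  then have "{w. E y w \<and> \<partial> x w = 1 \<and> \<partial> z w = 3} = {}" by fastforce
  then show ?thesis unfolding triple_count_def by simp
qed

lemma triple_count_1_1_commute: "triple_count E x y z 1 1 = triple_count E x z y 1 1"
proof -
  have "E y w \<and> \<partial> x w = 1 \<and> \<partial> z w = 1 \<longleftrightarrow> E z w \<and> \<partial> x w = 1 \<and> \<partial> y w = 1" for w
    using gdist_eq_1_iff adj_sym by blast
  then show ?thesis unfolding triple_count_def by simp
qed

lemma triple_count_2_2: "triple_count E x y z 2 2 = triple_count E x z y 1 2"
proof -
  have "E y (antipode v) \<and> \<partial> x (antipode v) = 2 \<and> \<partial> z (antipode v) = 2
      \<longleftrightarrow> E z v \<and> \<partial> x v = 1 \<and> \<partial> y v = 2" for v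
    using gdist_antipode[of y v] gdist_antipode[of x v] gdist_antipode[of z v]
      gdist_eq_1_iff[of y "antipode v"] gdist_eq_1_iff[of z v]
      gdist_le_diameter[of x v] gdist_le_diameter[of y v] gdist_le_diameter[of z v] by auto
  then show ?thesis unfolding triple_count_def
    using card_antipode[of "\<lambda>w. E y w \<and> \<partial> x w = 2 \<and> \<partial> z w = 2"] by simp
qed

text \<open>
  Write N_yz(i, j) for triple_count E x y z i j. Then N_yz(1, 2) = N_zy(1, 2), and the
  antipodal map identifies N_yz(2, 2) with N_zy(1, 2); so exactly half of the neighbours of y
  at distance 2 from z are adjacent to x.
\<close>

lemma triple_count_1_2:
  assumes "\<partial> x y = 1" "\<partial> x z = 1"
  shows "2 * triple_count E x y z 1 2 = card {w. E y w \<and> \<partial> z w = 2}"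
proof -
  have "card {w. E y w \<and> \<partial> x w = 1} = card {w. E z w \<and> \<partial> x w = 1}"
    using assms by (intro card_nbrs_at_gdist_cong) simp
  moreover have "triple_count E x y z 1 0 = triple_count E x z y 1 0"
    using assms triple_count_1_0 adj_sym by metis
  ultimately have "triple_count E x y z 1 2 = triple_count E x z y 1 2"
    using card_local_nbrs_eq_sum_triple_count[of x z y] card_local_nbrs_eq_sum_triple_count[of x y z]
      triple_count_1_1_commute[of x y z] assms by linarith
  then show ?thesis
    using card_nbrs_eq_sum_triple_count[of x y z 2] triple_count_0 triple_count_2_2 assms by simp
qed

lemma triple_count_local_cong:
  assumes "\<partial> x y = 1" "\<partial> x z = 1" "\<partial> x y' = 1" "\<partial> x z' = 1" "\<partial> y z = \<partial> y' z'"
  shows "triple_count E x y z = triple_count E x y' z'"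
proof (rule triple_count_eqI)
  fix i j :: nat assume "i \<le> 3" "j \<le> 3"
  have nbrs: "card {w. E y w \<and> \<partial> z w = j} = card {w. E y' w \<and> \<partial> z' w = j}" for j
    using assms(5) gdist_sym by (intro card_nbrs_at_gdist_cong) metis
  have row_0: "triple_count E x y z 0 j = triple_count E x y' z' 0 j"
    using triple_count_0 assms by simp
  have row_1: "triple_count E x y z 1 j = triple_count E x y' z' 1 j"
  proof -
    have at_2: "triple_count E x y z 1 2 = triple_count E x y' z' 1 2"
      using triple_count_1_2[of x y z] triple_count_1_2[of x y' z'] nbrs[of 2] assms by simp
    have at_0: "triple_count E x y z 1 0 = triple_count E x y' z' 1 0"
      using triple_count_1_0 assms gdist_eq_1_iff by metis
    have "card {w. E y w \<and> \<partial> x w = 1} = card {w. E y' w \<and> \<partial> x w = 1}"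
      using assms by (intro card_nbrs_at_gdist_cong) simp
    then have at_1: "triple_count E x y z 1 1 = triple_count E x y' z' 1 1"
      using card_local_nbrs_eq_sum_triple_count[of x z y] card_local_nbrs_eq_sum_triple_count[of x z' y']
        at_0 at_2 assms by linarith
    consider "j = 0" | "j = 1" | "j = 2" | "j = 3" using \<open>j \<le> 3\<close> by linarith
    then show ?thesis using at_0 at_1 at_2 triple_count_1_3 assms by cases simp_all
  qed
  have row_2: "triple_count E x y z 2 j = triple_count E x y' z' 2 j"
    using card_nbrs_eq_sum_triple_count[of x y z j] card_nbrs_eq_sum_triple_count[of x y' z' j]
      nbrs[of j] row_0 row_1 assms by linarith
  consider "i = 0" | "i = 1" | "i = 2" | "i = 3" using \<open>i \<le> 3\<close> by linarith
  then show "triple_count E x y z i j = triple_count E x y' z' i j"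
    using row_0 row_1 row_2 triple_count_3 assms by cases simp_all
qed

lemma triple_count_cong_near:
  assumes "dist_triple E x y z = dist_triple E x y' z'" "\<partial> x y \<le> 1" "\<partial> x z \<le> 1"
  shows "triple_count E x y z = triple_count E x y' z'"
proof -
  from assms(1) have same: "\<partial> x y = \<partial> x y'" "\<partial> x z = \<partial> x z'" "\<partial> y z = \<partial> y' z'"
    by (simp_all add: dist_triple_def)
  consider "\<partial> x y = 0" | "\<partial> x z = 0" | "\<partial> x y = 1" "\<partial> x z = 1" using assms(2,3) by linarith
  then show ?thesis
  proof cases
    case 1
    then have "y = x" "y' = x" using same by auto
    have at_x: "triple_count E x x u i j = (if i = 1 then card {w. E x w \<and> \<partial> u w = j} else 0)" for u i j
    proof -
      have "{w. E x w \<and> \<partial> x w = i \<and> \<partial> u w = j} = (if i = 1 then {w. E x w \<and> \<partial> u w = j} else {})"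
        using gdist_eq_1_iff[of x] by auto
      then show ?thesis unfolding triple_count_def by simp
    qed
    have "\<partial> z x = \<partial> z' x" using same(2) gdist_sym by metis
    then have "card {w. E x w \<and> \<partial> z w = j} = card {w. E x w \<and> \<partial> z' w = j}" for j
      by (rule card_nbrs_at_gdist_cong)
    then show ?thesis using \<open>y = x\<close> \<open>y' = x\<close> by (simp add: at_x fun_eq_iff)
  next
    case 2
    then have "z = x" "z' = x" using same by auto
    have at_x: "triple_count E x u x i j = (if i = j then card {w. E u w \<and> \<partial> x w = i} else 0)" for u i j
    proof -
      have "{w. E u w \<and> \<partial> x w = i \<and> \<partial> x w = j} = (if i = j then {w. E u w \<and> \<partial> x w = i} else {})"
        by auto
      then show ?thesis unfolding triple_count_def by simp
    qed
    have "card {w. E y w \<and> \<partial> x w = i} = card {w. E y' w \<and> \<partial> x w = i}" for i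
      using same(1) by (rule card_nbrs_at_gdist_cong)
    then show ?thesis using \<open>z = x\<close> \<open>z' = x\<close> by (simp add: at_x fun_eq_iff)
  next
    case 3
    then show ?thesis using same by (intro triple_count_local_cong) simp_all
  qed
qed

lemma dist_triple_antipode_left:
  "dist_triple E x (antipode y) z = (3 - \<partial> x y, \<partial> x z, 3 - \<partial> y z)"
  by (simp add: dist_triple_def gdist_antipode gdist_antipode_left)

lemma dist_triple_antipode_right:
  "dist_triple E x y (antipode z) = (\<partial> x y, 3 - \<partial> x z, 3 - \<partial> y z)"
  by (simp add: dist_triple_def gdist_antipode)

lemma triple_count_cong:
  assumes "dist_triple E x y z = dist_triple E x y' z'"
  shows "triple_count E x y z = triple_count E x y' z'"
proof -
  have near_left: "triple_count E x y z = triple_count E x y' z'"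
    if "dist_triple E x y z = dist_triple E x y' z'" "\<partial> x y \<le> 1" for y z y' z'
  proof (cases "\<partial> x z \<le> 1")
    case True
    then show ?thesis using that by (intro triple_count_cong_near)
  next
    case False
    have "dist_triple E x y (antipode z) = dist_triple E x y' (antipode z')"
      using that(1) unfolding dist_triple_antipode_right by (simp add: dist_triple_def)
    moreover have "\<partial> x (antipode z) \<le> 1" using False by (simp add: gdist_antipode)
    ultimately have "triple_count E x y (antipode z) = triple_count E x y' (antipode z')"
      using that(2) by (intro triple_count_cong_near)
    then show ?thesis by (rule triple_count_cong_antipode_right)
  qed
  show ?thesis
  proof (cases "\<partial> x y \<le> 1")
    case True
    then show ?thesis using assms by (intro near_left)
  next
    case False
    have "dist_triple E x (antipode y) z = dist_triple E x (antipode y') z'"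
      using assms unfolding dist_triple_antipode_left by (simp add: dist_triple_def)
    moreover have "\<partial> x (antipode y) \<le> 1" using False by (simp add: gdist_antipode)
    ultimately have "triple_count E x (antipode y) z = triple_count E x (antipode y') z'"
      by (intro near_left)
    then show ?thesis by (rule triple_count_cong_antipode_left)
  qed
qed

lemma gdist_same_sphere_le_2:
  assumes "\<partial> x y = \<partial> x z"
  shows "\<partial> y z \<le> 2"
proof -
  have adjacent: "\<partial> y z \<le> 2" if "\<partial> x y = 1" "\<partial> x z = 1" for y z
    using gdist_adj_le[of x z y] that gdist_eq_1_iff gdist_sym[of y x] by simp
  consider "\<partial> x y = 0" | "\<partial> x y = 1" | "\<partial> x y = 2" | "\<partial> x y = 3"
    using gdist_le_diameter[of x y] by linarith
  then show ?thesis
  proof cases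
    case 1
    then show ?thesis using assms by simp
  next
    case 2
    then show ?thesis using assms adjacent by simp
  next
    case 3
    then have "\<partial> (antipode y) (antipode z) \<le> 2"
      using assms by (intro adjacent) (simp_all add: gdist_antipode)
    then show ?thesis by (simp add: gdist_antipode_antipode)
  next
    case 4
    then have "y = antipode x" "z = antipode x" using assms gdist_eq_3_iff by metis+
    then show ?thesis by simp
  qed
qed

lemma dist_triple_in_taylor_triples: "dist_triple E x y z \<in> taylor_triples"
  unfolding dist_triple_def
proof (rule mem_taylor_triples)
  show "\<partial> x y \<le> 3" "\<partial> x z \<le> 3" "\<partial> y z \<le> 3" by (rule gdist_le_diameter)+
  show "\<partial> y z = \<partial> x z" if "\<partial> x y = 0" using that by simp
  show "\<partial> y z = \<partial> x y" if "\<partial> x z = 0" using that gdist_sym by simp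
  show "\<partial> y z = 3 - \<partial> x z" if "\<partial> x y = 3"
    using that gdist_eq_3_iff gdist_antipode_left by simp
  show "\<partial> y z = 3 - \<partial> x y" if "\<partial> x z = 3"
    using that gdist_eq_3_iff gdist_antipode[of y x] gdist_sym[of y x] by simp
  show "\<partial> y z \<le> 2" if "\<partial> x y = \<partial> x z" using that by (rule gdist_same_sphere_le_2)
  show "\<partial> y z \<noteq> 0" if "\<partial> x y \<noteq> \<partial> x z" using that by auto
qed

lemma taylor_triples_subset_dist_triples: "taylor_triples \<subseteq> range (case_prod (dist_triple E x))"
proof -
  have realized: "(\<partial> x p, \<partial> x q, \<partial> p q) \<in> range (case_prod (dist_triple E x))" for p q
    by (auto simp: dist_triple_def image_iff)
  obtain y1 where y1: "\<partial> x y1 = 1" using gdist_attained by fastforce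
  have "card {w. E y1 w \<and> \<partial> x w = 1} = k - 1 - \<mu>"
    using card_nbrs_split[of x y1] card_nbrs_closer[of x y1] card_nbrs_farther[of x y1] valency y1 by simp
  then have "0 < card {w. E y1 w \<and> \<partial> x w = 1}" using mu_less by linarith
  then obtain z1 where z1: "E y1 z1" "\<partial> x z1 = 1" by (auto simp: card_gt_0_iff)
  have "card {w. E y1 w \<and> \<partial> x w = 2} = \<mu>"
    using card_nbrs_farther[of x y1] y1 by (simp add: numeral_2_eq_2)
  then have "0 < card {w. E y1 w \<and> \<partial> x w = 2}" using mu_pos by linarith
  then obtain y2 where y2: "E y1 y2" "\<partial> x y2 = 2" by (auto simp: card_gt_0_iff)
  have adjacent: "\<partial> y1 z1 = 1" "\<partial> z1 y1 = 1" "\<partial> y1 y2 = 1" "\<partial> y2 y1 = 1"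
    using z1(1) y2(1) adj_sym gdist_eq_1_iff by blast+
  have "\<partial> y1 x = 1" using y1 gdist_sym[of y1 x] by simp
  note dists = adjacent this y1 z1(2) y2(2) gdist_antipode gdist_antipode_left gdist_antipode_antipode
  show ?thesis
    unfolding taylor_triples_def
    using realized[of x x] realized[of x y1] realized[of x "antipode y1"] realized[of x "antipode x"]
      realized[of y1 x] realized[of "antipode y1" x] realized[of "antipode x" x]
      realized[of "antipode x" y1] realized[of "antipode x" "antipode y1"]
      realized[of "antipode x" "antipode x"] realized[of y1 "antipode x"]
      realized[of "antipode y1" "antipode x"] realized[of y1 y1] realized[of y1 z1]
      realized[of y1 "antipode y2"] realized[of "antipode y1" "antipode y1"]
      realized[of "antipode y1" "antipode z1"] realized[of "antipode y1" y2] realized[of y1 y2]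
      realized[of y1 "antipode z1"] realized[of y1 "antipode y1"] realized[of y2 y1]
      realized[of "antipode z1" y1] realized[of "antipode y1" y1]
    by (simp add: dists)
qed

lemma dist_triples: "range (case_prod (dist_triple E x)) = taylor_triples"
  using dist_triple_in_taylor_triples taylor_triples_subset_dist_triples[of x] by auto

end

theorem proposition7p8:
  fixes E :: "'n::finite \<Rightarrow> 'n \<Rightarrow> bool" and x :: 'n
  assumes "taylor_graph E"
  shows "vector_space.dim cmat_scale (terwilliger E x) = 24"
proof -
  obtain k \<mu> where "\<mu> < k - 1" "distance_regular E 3 (\<lambda>i. [k, \<mu>, 1] ! i) (\<lambda>i. [0, 1, \<mu>, k] ! i)"
    using assms unfolding taylor_graph_def by blast
  then interpret taylor E k \<mu> by unfold_locales
  have "terwilliger E x = T x"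
    unfolding terwilliger_def by (simp add: atLeast0AtMost)
  then show ?thesis
    using dim_T_eq_card_dist_triples[OF triple_count_cong] dist_triples card_taylor_triples
    by simp
qed

end
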